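(* Let $n\ge1$ and let $c\in\mathfrak{S}_{n+1}$ be a Coxeter element. For every $\boldsymbol\pi=(\pi^k)_{1\le k\le n}\in\mathcal{ST}(c)$ and every $1\le k\le n$, \[\ell(\pi^k)\leqslant\min\bigl(\#\{i\in\mathbf L_c\cup\{1\}:i\leqslant k\},\ \#\{j\in\mathbf R_c\cup\{n+1\}:j>k\}\bigr).\]
   Context: $\ell(\pi)$ is the number of nonzero parts of a partition $\pi$. Coxeter element of $\mathfrak{S}_{n+1}$: product of $s_1,\dots,s_n$ ($s_i=(i,i+1)$), each exactly once; it is a long cycle $(c_1=1<c_2<\dots<c_m=n+1>c_{m+1}>\dots>c_{n+1})$, with $\mathbf L_c=\{c_2,\dots,c_{m-1}\}$, $\mathbf R_c=\{c_{m+1},\dots,c_{n+1}\}$. Storability: a pair of partitions $(\lambda,\mu)$ (padded with zeros) is storable if $\lambda_i\ge\mu_i\ge\lambda_{i+1}$ for all $i\ge1$. A triple $(\lambda,\mu,\nu)$ is $(\boxplus,\boxplus)$-storable if $(\lambda,\mu)$ and $(\nu,\mu)$ are storable; $(\boxplus,\boxminus)$-storable if $(\lambda,\mu)$ and $(\mu,\nu)$ are; $(\boxminus,\boxplus)$-storable if $(\mu,\lambda)$ and $(\nu,\mu)$ are; $(\boxminus,\boxminus)$-storable if $(\mu,\lambda)$ and $(\mu,\nu)$ are. For $\boldsymbol\pi=(\pi^1,\dots,\pi^n)$ set $\pi^0=\pi^{n+1}=(0)$; $\boldsymbol\pi$ is $X$-storable at $i$ if $(\pi^{i-1},\pi^i,\pi^{i+1})$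 is $X$-storable. With $\mathbf L=\mathbf L_c\cup\{1\}$, $\mathbf R=\mathbf R_c\cup\{n+1\}$ and $\mathbf R[-1]=\{r-1:r\in\mathbf R\}$, $\boldsymbol\pi\in\mathcal{ST}(c)$ ($c$-storable) means that for each $i\in\{1,\dots,n\}$: $(\boxplus,\boxplus)$-storable at $i$ if $i\notin\mathbf L\cup\mathbf R[-1]$; $(\boxplus,\boxminus)$-storable at $i$ if $i\in\mathbf R[-1]\setminus\mathbf L$; $(\boxminus,\boxplus)$-storable at $i$ if $i\in\mathbf L\setminus\mathbf R[-1]$; $(\boxminus,\boxminus)$-storable at $i$ if $i\in\mathbf L\cap\mathbf R[-1]$; and $\pi^k=(0)$ for $k\notin\{\min\mathbf L,\dots,\max\mathbf R\}$. *)

theory Defs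
  imports Main
begin

text \<open>Partitions are represented as functions nat => nat, 0-indexed:
  p i is the (i+1)-st part; weakly decreasing and eventually zero (padded with zeros).\<close>

definition is_partition :: "(nat \<Rightarrow> nat) \<Rightarrow> bool" where
  "is_partition p \<longleftrightarrow> (\<forall>i. p (Suc i) \<le> p i) \<and> (\<exists>N. \<forall>i\<ge>N. p i = 0)"

definition zero_partition :: "nat \<Rightarrow> nat" where
  "zero_partition = (\<lambda>_. 0)"

definition plen :: "(nat \<Rightarrow> nat) \<Rightarrow> nat" where
  "plen p = card {i. p i \<noteq> 0}"

definition storable :: "(nat \<Rightarrow> nat) \<Rightarrow> (nat \<Rightarrow> nat) \<Rightarrow> bool" where
  "storable la mu \<longleftrightarrow> (\<forall>i. mu i \<le> la i \<and> la (Suc i) \<le> mu i)"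

definition st_pp :: "(nat \<Rightarrow> nat) \<Rightarrow> (nat \<Rightarrow> nat) \<Rightarrow> (nat \<Rightarrow> nat) \<Rightarrow> bool" where
  "st_pp la mu nu \<longleftrightarrow> storable la mu \<and> storable nu mu"
definition st_pm :: "(nat \<Rightarrow> nat) \<Rightarrow> (nat \<Rightarrow> nat) \<Rightarrow> (nat \<Rightarrow> nat) \<Rightarrow> bool" where
  "st_pm la mu nu \<longleftrightarrow> storable la mu \<and> storable mu nu"
definition st_mp :: "(nat \<Rightarrow> nat) \<Rightarrow> (nat \<Rightarrow> nat) \<Rightarrow> (nat \<Rightarrow> nat) \<Rightarrow> bool" where
  "st_mp la mu nu \<longleftrightarrow> storable mu la \<and> storable nu mu"
definition st_mm :: "(nat \<Rightarrow> nat) \<Rightarrow> (nat \<Rightarrow> nat) \<Rightarrow> (nat \<Rightarrow> nat) \<Rightarrow> bool" where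
  "st_mm la mu nu \<longleftrightarrow> storable mu la \<and> storable mu nu"

definition stransp :: "nat \<Rightarrow> nat \<Rightarrow> nat" where
  "stransp i x = (if x = i then Suc i else if x = Suc i then i else x)"

definition coxeter_element :: "nat \<Rightarrow> (nat \<Rightarrow> nat) \<Rightarrow> bool" where
  "coxeter_element n c \<longleftrightarrow>
     (\<exists>ws. distinct ws \<and> set ws = {1..n} \<and> c = foldr (\<lambda>i f. stransp i \<circ> f) ws id)"

text \<open>Writing c as the cycle (c_1 = 1, c_2, ..., c_(n+1)) with c(c_i) = c_(i+1),
  so c_(i+1) = c^i(1); m is the position of n+1.\<close>
definition cyc_pos_top :: "nat \<Rightarrow> (nat \<Rightarrow> nat) \<Rightarrow> nat" where
  "cyc_pos_top n c = (LEAST k. (c ^^ k) 1 = n + 1)"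

definition Lc :: "nat \<Rightarrow> (nat \<Rightarrow> nat) \<Rightarrow> nat set" where
  "Lc n c = {(c ^^ k) 1 | k. 0 < k \<and> k < cyc_pos_top n c}"

definition Rc :: "nat \<Rightarrow> (nat \<Rightarrow> nat) \<Rightarrow> nat set" where
  "Rc n c = {(c ^^ k) 1 | k. cyc_pos_top n c < k \<and> k \<le> n}"

definition ext_fam :: "nat \<Rightarrow> (nat \<Rightarrow> nat \<Rightarrow> nat) \<Rightarrow> nat \<Rightarrow> nat \<Rightarrow> nat" where
  "ext_fam n pi k = (if 1 \<le> k \<and> k \<le> n then pi k else zero_partition)"

definition c_storable :: "nat \<Rightarrow> (nat \<Rightarrow> nat) \<Rightarrow> (nat \<Rightarrow> nat \<Rightarrow> nat) \<Rightarrow> bool" where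
  "c_storable n c pi \<longleftrightarrow>
    (let L = Lc n c \<union> {1}; R = Rc n c \<union> {n + 1}; Rm = (\<lambda>r. r - 1) ` R;
         P = ext_fam n pi in
     (\<forall>i\<in>{1..n}.
        (i \<notin> L \<and> i \<notin> Rm \<longrightarrow> st_pp (P (i - 1)) (P i) (P (i + 1))) \<and>
        (i \<in> Rm \<and> i \<notin> L \<longrightarrow> st_pm (P (i - 1)) (P i) (P (i + 1))) \<and>
        (i \<in> L \<and> i \<notin> Rm \<longrightarrow> st_mp (P (i - 1)) (P i) (P (i + 1))) \<and>
        (i \<in> L \<and> i \<in> Rm \<longrightarrow> st_mm (P (i - 1)) (P i) (P (i + 1)))) \<and>
     (\<forall>k\<in>{1..n}. k \<notin> {Min L..Max R} \<longrightarrow> P k = zero_partition))"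

end

theory Submission
  imports Defs
begin

text \<open>If \<open>(\<lambda>, \<mu>)\<close> is storable then \<open>\<mu>\<close> interlaces \<open>\<lambda>\<close>, so
  \<open>\<ell>(\<mu>) \<le> \<ell>(\<lambda>) \<le> \<ell>(\<mu>) + 1\<close>. The storability condition at \<open>i\<close> makes
  \<open>\<pi>\<^bsup>i-1\<^esup>, \<pi>\<^bsup>i\<^esup>\<close> storable in one of the two orders, and \<open>\<pi>\<^bsup>i\<^esup>\<close>
  comes first only when \<open>i \<in> L\<close>. Walking from \<open>\<pi>\<^bsup>0\<^esup> = (0)\<close> up to
  \<open>\<pi>\<^bsup>k\<^esup>\<close>, the length can therefore grow only at the elements of \<open>L\<close> up
  to \<open>k\<close>; symmetrically, the pair \<open>\<pi>\<^bsup>i\<^esup>, \<pi>\<^bsup>i+1\<^esup>\<close> has \<open>\<pi>\<^bsup>i\<^esup>\<close>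
  first only when \<open>i + 1 \<in> R\<close>, so walking down from \<open>\<pi>\<^bsup>n+1\<^esup> = (0)\<close> the
  length grows only at the elements of \<open>R\<close> above \<open>k\<close>.\<close>

lemma is_partition_finite_support: "is_partition p \<Longrightarrow> finite {i. p i \<noteq> 0}"
proof -
  assume "is_partition p"
  then obtain N where "\<forall>i\<ge>N. p i = 0" unfolding is_partition_def by blast
  then have "{i. p i \<noteq> 0} \<subseteq> {..<N}" by (auto simp: not_less[symmetric])
  then show ?thesis using finite_subset by blast
qed

lemma is_partition_zero_partition: "is_partition zero_partition"
  unfolding is_partition_def zero_partition_def by simp

lemma plen_zero_partition [simp]: "plen zero_partition = 0"
  unfolding plen_def zero_partition_def by simp

lemma is_partition_ext_fam:
  "\<forall>k\<in>{1..n}. is_partition (pi k) \<Longrightarrow> is_partition (ext_fam n pi k)"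
  unfolding ext_fam_def by (simp add: is_partition_zero_partition)

lemma storable_plen_le:
  assumes "storable la mu" and "is_partition la"
  shows "plen mu \<le> plen la"
proof -
  have "{i. mu i \<noteq> 0} \<subseteq> {i. la i \<noteq> 0}"
  proof
    fix i assume "i \<in> {i. mu i \<noteq> 0}"
    moreover have "mu i \<le> la i" using assms(1) by (simp add: storable_def)
    ultimately show "i \<in> {i. la i \<noteq> 0}" by simp
  qed
  then show ?thesis
    unfolding plen_def by (rule card_mono[OF is_partition_finite_support[OF assms(2)]])
qed

lemma storable_plen_le_Suc:
  assumes "storable la mu" and "is_partition mu"
  shows "plen la \<le> Suc (plen mu)"
proof -
  have fin: "finite {i. mu i \<noteq> 0}" using is_partition_finite_support[OF assms(2)] .
  have "{i. la i \<noteq> 0} \<subseteq> insert 0 (Suc ` {i. mu i \<noteq> 0})"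
  proof
    fix i assume i: "i \<in> {i. la i \<noteq> 0}"
    show "i \<in> insert 0 (Suc ` {i. mu i \<noteq> 0})"
    proof (cases i)
      case (Suc j)
      have "la (Suc j) \<le> mu j" using assms(1) by (simp add: storable_def)
      then have "mu j \<noteq> 0" using i Suc by simp
      then show ?thesis using Suc by blast
    qed simp
  qed
  then have "card {i. la i \<noteq> 0} \<le> card (insert 0 (Suc ` {i. mu i \<noteq> 0}))"
    using fin by (intro card_mono) auto
  also have "\<dots> \<le> Suc (card (Suc ` {i. mu i \<noteq> 0}))"
    using fin by (simp add: card_insert_if)
  also have "\<dots> \<le> Suc (card {i. mu i \<noteq> 0})"
    using card_image_le fin by auto
  finally show ?thesis unfolding plen_def .
qed

lemma plen_storable_chain:
  assumes partitions: "\<forall>j\<le>m. is_partition (P j)"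
    and steps: "\<forall>j<m. if j \<in> A then storable (P (Suc j)) (P j) else storable (P j) (P (Suc j))"
  shows "plen (P m) \<le> plen (P 0) + card {j \<in> A. j < m}"
  using assms
proof (induction m)
  case 0
  then show ?case by simp
next
  case (Suc m)
  have IH: "plen (P m) \<le> plen (P 0) + card {j \<in> A. j < m}"
    using Suc by simp
  have fin: "finite {j \<in> A. j < m}" by simp
  show ?case
  proof (cases "m \<in> A")
    case True
    then have "plen (P (Suc m)) \<le> Suc (plen (P m))"
      using Suc.prems by (intro storable_plen_le_Suc) auto
    moreover have "{j \<in> A. j < Suc m} = insert m {j \<in> A. j < m}"
      using True by auto
    ultimately show ?thesis using IH fin by simp
  next
    case False
    then have "plen (P (Suc m)) \<le> plen (P m)"
      using Suc.prems by (intro storable_plen_le) auto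
    moreover have "{j \<in> A. j < Suc m} = {j \<in> A. j < m}"
      using False by (auto simp: less_Suc_eq)
    ultimately show ?thesis using IH by simp
  qed
qed

lemma c_storable_storable_left:
  assumes "c_storable n c pi" and "i \<in> {1..n}"
  shows "if i \<in> Lc n c \<union> {1}
         then storable (ext_fam n pi i) (ext_fam n pi (i - 1))
         else storable (ext_fam n pi (i - 1)) (ext_fam n pi i)"
  using assms unfolding c_storable_def Let_def st_pp_def st_pm_def st_mp_def st_mm_def
  by (cases "i \<in> Lc n c \<union> {1}"; cases "i \<in> (\<lambda>r. r - 1) ` (Rc n c \<union> {n + 1})") auto

lemma c_storable_storable_right:
  assumes "c_storable n c pi" and "i \<in> {1..n}"
  shows "if i + 1 \<in> Rc n c \<union> {n + 1}
         then storable (ext_fam n pi i) (ext_fam n pi (i + 1))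
         else storable (ext_fam n pi (i + 1)) (ext_fam n pi i)"
proof -
  have "i \<in> (\<lambda>r. r - 1) ` (Rc n c \<union> {n + 1}) \<longleftrightarrow> i + 1 \<in> Rc n c \<union> {n + 1}"
    using assms(2) by (force simp: image_iff)
  then show ?thesis
    using assms unfolding c_storable_def Let_def st_pp_def st_pm_def st_mp_def st_mm_def
    by (cases "i \<in> Lc n c \<union> {1}"; cases "i + 1 \<in> Rc n c \<union> {n + 1}") auto
qed

lemma finite_Rc: "finite (Rc n c)"
proof -
  have "Rc n c \<subseteq> (\<lambda>k. (c ^^ k) 1) ` {..n}" unfolding Rc_def by auto
  then show ?thesis using finite_subset by blast
qed

lemma c_storable_plen_le_left:
  assumes "c_storable n c pi" and "\<forall>k\<in>{1..n}. is_partition (pi k)" and "k \<le> n"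
  shows "plen (ext_fam n pi k) \<le> card {i \<in> Lc n c \<union> {1}. i \<le> k}"
proof -
  let ?P = "ext_fam n pi" and ?A = "{j. Suc j \<in> Lc n c \<union> {1}}"
  have "plen (?P k) \<le> plen (?P 0) + card {j \<in> ?A. j < k}"
  proof (rule plen_storable_chain)
    show "\<forall>j\<le>k. is_partition (?P j)" using assms(2) is_partition_ext_fam by blast
    show "\<forall>j<k. if j \<in> ?A then storable (?P (Suc j)) (?P j) else storable (?P j) (?P (Suc j))"
      using c_storable_storable_left[OF assms(1)] assms(3) by fastforce
  qed
  also have "plen (?P 0) = 0" by (simp add: ext_fam_def)
  also have "card {j \<in> ?A. j < k} \<le> card {i \<in> Lc n c \<union> {1}. i \<le> k}"
    by (rule card_inj_on_le[where f = Suc]) auto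
  finally show ?thesis by simp
qed

lemma c_storable_plen_le_right:
  assumes "c_storable n c pi" and "\<forall>k\<in>{1..n}. is_partition (pi k)" and "1 \<le> k" and "k \<le> n"
  shows "plen (ext_fam n pi k) \<le> card {j \<in> Rc n c \<union> {n + 1}. j > k}"
proof -
  let ?P = "\<lambda>d. ext_fam n pi (n + 1 - d)" and ?A = "{d. n + 1 - d \<in> Rc n c \<union> {n + 1}}"
  have "plen (?P (n + 1 - k)) \<le> plen (?P 0) + card {d \<in> ?A. d < n + 1 - k}"
  proof (rule plen_storable_chain)
    show "\<forall>d\<le>n + 1 - k. is_partition (?P d)" using assms(2) is_partition_ext_fam by blast
    show "\<forall>d<n + 1 - k. if d \<in> ?A then storable (?P (Suc d)) (?P d) else storable (?P d) (?P (Suc d))"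
    proof (intro allI impI)
      fix d assume "d < n + 1 - k"
      then have i: "n - d \<in> {1..n}" and "n + 1 - d = n - d + 1" and "n + 1 - Suc d = n - d"
        using assms(3,4) by auto
      then show "if d \<in> ?A then storable (?P (Suc d)) (?P d) else storable (?P d) (?P (Suc d))"
        using c_storable_storable_right[OF assms(1) i] by (simp only: mem_Collect_eq)
    qed
  qed
  also have "plen (?P 0) = 0" by (simp add: ext_fam_def)
  also have "card {d \<in> ?A. d < n + 1 - k} \<le> card {j \<in> Rc n c \<union> {n + 1}. j > k}"
    by (rule card_inj_on_le[where f = "\<lambda>d. n + 1 - d"]) (auto simp: inj_on_def finite_Rc)
  finally show ?thesis using assms(4) by simp
qed

theorem proposition4p10:
  fixes n :: nat and c :: "nat \<Rightarrow> nat" and pi :: "nat \<Rightarrow> nat \<Rightarrow> nat"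
  assumes "n \<ge> 1"
    and "coxeter_element n c"
    and "\<forall>k\<in>{1..n}. is_partition (pi k)"
    and "c_storable n c pi"
    and "1 \<le> k" and "k \<le> n"
  shows "plen (pi k) \<le> min (card {i \<in> Lc n c \<union> {1}. i \<le> k})
                            (card {j \<in> Rc n c \<union> {n + 1}. j > k})"
proof -
  have "ext_fam n pi k = pi k" using assms(5,6) by (simp add: ext_fam_def)
  then show ?thesis
    using c_storable_plen_le_left[OF assms(4,3,6)] c_storable_plen_le_right[OF assms(4,3,5,6)]
    by simp
qed

end
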